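(* Let $C$ be a Polish space having a countable base $\{B_n:n\in\omega\}$ of non-empty open sets such that each $B_n$ is homeomorphic to $C$. (1) If there is a $Q$-set in $C$ of cardinality $\aleph_2$, then there is a $Q$-set $Z\subseteq C$ of cardinality $\aleph_2$ which is dense in $C$ and satisfies $\Delta(Z)=\aleph_2$. (2) If there is a Luzin set in $C$, then there is a Luzin set in $C$ which is dense in $C$ and locally uncountable (every non-empty relatively open subset of it is uncountable).
   Context: A $Q$-set in a Polish space $C$ is an uncountable subset $Y\subseteq C$ every subset of which is a relative $F_\sigma$ in $Y$. A Luzin set in $C$ is an uncountable subset of $C$ which meets every first category subset of $C$ in a countable set. $\Delta(Z)$ is the least cardinality of a non-empty relatively open subset of $Z$. *)

theory Defs
  imports "HOL-Analysis.Analysis"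
begin

definition aleph2 :: "nat set set rel" where
  "aleph2 = cardSuc (cardSuc natLeq)"

definition nowhere_dense :: "'a::topological_space set \<Rightarrow> bool" where
  "nowhere_dense S \<longleftrightarrow> interior (closure S) = {}"

definition first_category :: "'a::topological_space set \<Rightarrow> bool" where
  "first_category S \<longleftrightarrow> (countable union_of nowhere_dense) S"

definition Q_set :: "'a::topological_space set \<Rightarrow> bool" where
  "Q_set Y \<longleftrightarrow> uncountable Y \<and> (\<forall>A. A \<subseteq> Y \<longrightarrow> fsigma_in (top_of_set Y) A)"

definition Luzin_set :: "'a::topological_space set \<Rightarrow> bool" where
  "Luzin_set Y \<longleftrightarrow> uncountable Y \<and> (\<forall>M. first_category M \<longrightarrow> countable (Y \<inter> M))"

text \<open>\<open>Delta_is Z k\<close>: k is (up to ordinal isomorphism) the least cardinality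
  of a non-empty relatively open subset of Z.\<close>
definition Delta_is :: "'a::topological_space set \<Rightarrow> 'b rel \<Rightarrow> bool" where
  "Delta_is Z k \<longleftrightarrow>
     (\<exists>U. openin (top_of_set Z) U \<and> U \<noteq> {} \<and> (card_of U, k) \<in> ordIso) \<and>
     (\<forall>U. openin (top_of_set Z) U \<and> U \<noteq> {} \<longrightarrow> (k, card_of U) \<in> ordLeq)"

end

theory Submission
  imports Defs
begin

(* Both parts spread a given set Y over the whole space
   by copying it into the basic open sets; a union of copies meeting every B n is dense.

   Luzin sets: Z = (UN n. f n ` Y).  A homeomorphism onto an open set pulls nowhere dense,
   hence first category, sets back to sets of the same kind, so each copy f n ` Y is a Luzin
   set, and so is the countable union Z.  Z contains an uncountable copy inside every B n,
   hence is dense and locally uncountable.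

   Q-sets: a union of Q-sets need not be a Q-set, so the copies are chosen more carefully.
   (1) Removing from Y the union of its basic pieces of size <= aleph_1 leaves a locally large
   core Y' (every non-empty relatively open subset has size aleph_2).  (2) Its copies
   P j = f j ` Y' inside B j are again locally large Q-sets of size aleph_2.  (3) Select the
   indices T greedily: j is selected iff B j misses all earlier selected copies.  Each selected
   P j is then the trace of the closed-in-open set closure (P j) Int B j on Z = (UN j:T. P j),
   hence a relative F-sigma, and a countable union of relatively F-sigma pieces with the
   Q-property has the Q-property.  Every rejected B j meets an earlier copy, so Z is dense;
   Delta(Z) = aleph_2 is inherited from the copies. *)

unbundle cardinal_syntax

section \<open>Cardinals up to \<open>\<aleph>\<^sub>2\<close>\<close>

definition aleph1 :: "nat set rel" where
  "aleph1 = cardSuc natLeq"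

lemma aleph2_eq: "aleph2 = cardSuc aleph1"
  unfolding aleph2_def aleph1_def ..

lemma Cinfinite_aleph1: "Cinfinite aleph1"
  by (simp add: aleph1_def Cinfinite_cardSuc natLeq_Cinfinite)

lemma Cinfinite_aleph2: "Cinfinite aleph2"
  by (simp add: aleph2_eq Cinfinite_cardSuc Cinfinite_aleph1)

lemma countable_card_le_natLeq:
  assumes "countable A"
  shows "|A| \<le>o natLeq"
proof -
  obtain f :: "_ \<Rightarrow> nat" where "inj_on f A"
    using assms unfolding countable_def by blast
  then have "|A| \<le>o |UNIV :: nat set|"
    using card_of_ordLeq by blast
  then show ?thesis
    using card_of_nat by (rule ordLeq_ordIso_trans)
qed

lemma card_of_countable_UN_le:
  assumes r: "Cinfinite r" and I: "countable I" and A: "\<And>i. i \<in> I \<Longrightarrow> |A i| \<le>o r"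
  shows "|\<Union>i\<in>I. A i| \<le>o r"
proof (rule card_of_UNION_ordLeq_infinite_Field)
  show "\<not> finite (Field r)" "Card_order r"
    using r by (simp_all add: cinfinite_def)
  show "|I| \<le>o r"
    using countable_card_le_natLeq[OF I] natLeq_ordLeq_cinfinite[OF r] by (rule ordLeq_transitive)
qed (use A in blast)

definition le_aleph1 :: "'a set \<Rightarrow> bool" where
  "le_aleph1 S \<longleftrightarrow> |S| \<le>o aleph1"

text \<open>Since \<open>\<aleph>\<^sub>2\<close> is the successor of \<open>\<aleph>\<^sub>1\<close>, not being of size \<open>\<le> \<aleph>\<^sub>1\<close> means having size \<open>\<ge> \<aleph>\<^sub>2\<close>.\<close>
lemma not_le_aleph1_iff: "\<not> le_aleph1 S \<longleftrightarrow> aleph2 \<le>o |S|"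
proof -
  have card: "Card_order aleph1"
    using Cinfinite_aleph1 by simp
  then have "Well_order aleph1"
    by (rule card_order_on_well_order_on)
  then have "\<not> le_aleph1 S \<longleftrightarrow> aleph1 <o |S|"
    unfolding le_aleph1_def using card_of_Well_order by (rule not_ordLeq_iff_ordLess)
  also have "\<dots> \<longleftrightarrow> aleph2 \<le>o |S|"
    unfolding aleph2_eq using card card_of_Card_order by (rule cardSuc_ordLess_ordLeq)
  finally show ?thesis .
qed

lemma card_of_eq_aleph2_iff: "(card_of S, aleph2) \<in> ordIso \<longleftrightarrow> \<not> le_aleph1 S \<and> |S| \<le>o aleph2"
  unfolding ordIso_iff_ordLeq not_le_aleph1_iff by blast

lemma le_aleph1_subset: "le_aleph1 S \<Longrightarrow> T \<subseteq> S \<Longrightarrow> le_aleph1 T"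
  unfolding le_aleph1_def by (metis card_of_mono1 ordLeq_transitive)

lemma countable_imp_le_aleph1: "countable S \<Longrightarrow> le_aleph1 S"
  unfolding le_aleph1_def
  using countable_card_le_natLeq natLeq_ordLeq_cinfinite[OF Cinfinite_aleph1] by (rule ordLeq_transitive)

lemma uncountable_if_not_le_aleph1: "\<not> le_aleph1 S \<Longrightarrow> uncountable S"
  using countable_imp_le_aleph1 by blast

lemma le_aleph1_Un:
  assumes "le_aleph1 S" "le_aleph1 T"
  shows "le_aleph1 (S \<union> T)"
  unfolding le_aleph1_def
proof (rule card_of_Un_ordLeq_infinite_Field)
  show "\<not> finite (Field aleph1)" "Card_order aleph1"
    using Cinfinite_aleph1 by (simp_all add: cinfinite_def)
qed (use assms in \<open>simp_all add: le_aleph1_def\<close>)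

lemma le_aleph1_countable_UN:
  "countable I \<Longrightarrow> (\<And>i. i \<in> I \<Longrightarrow> le_aleph1 (A i)) \<Longrightarrow> le_aleph1 (\<Union>i\<in>I. A i)"
  unfolding le_aleph1_def by (rule card_of_countable_UN_le[OF Cinfinite_aleph1])

lemma card_of_inj_image:
  assumes "inj_on f S"
  shows "(card_of (f ` S), card_of S) \<in> ordIso"
proof -
  have "bij_betw f S (f ` S)"
    using assms by (rule inj_on_imp_bij_betw)
  then have "(card_of S, card_of (f ` S)) \<in> ordIso"
    using card_of_ordIso by blast
  then show ?thesis
    by (rule ordIso_symmetric)
qed

lemma le_aleph1_inj_image:
  assumes "inj_on f S"
  shows "le_aleph1 (f ` S) \<longleftrightarrow> le_aleph1 S"
  using ordIso_ordLeq_trans[OF card_of_inj_image[OF assms]]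
    ordIso_ordLeq_trans[OF ordIso_symmetric[OF card_of_inj_image[OF assms]]]
  unfolding le_aleph1_def by blast

section \<open>The basic open sets\<close>

text \<open>A homeomorphism between subspaces in the sense of \<open>homeomorphism\<close> is one between the
  corresponding subspace topologies; this lets us use the abstract-topology library.\<close>
lemma homeomorphism_imp_homeomorphic_map:
  "homeomorphism S T f g \<Longrightarrow> homeomorphic_map (top_of_set S) (top_of_set T) f"
  unfolding homeomorphic_map_maps homeomorphic_maps_def homeomorphism_def
  by (force simp: Pi_iff)

lemma homeomorphism_inj_on:
  assumes "homeomorphism UNIV T f g"
  shows "inj_on f A"
  by (rule inj_on_inverseI) (rule homeomorphism_apply1[OF assms UNIV_I])

lemma homeomorphisms_onto_basis:
  fixes B :: "nat \<Rightarrow> 'a::topological_space set"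
  assumes "\<And>n. B n homeomorphic (UNIV :: 'a set)"
  obtains f g :: "nat \<Rightarrow> 'a \<Rightarrow> 'a" where "\<And>n. homeomorphism UNIV (B n) (f n) (g n)"
proof -
  have "\<forall>n. \<exists>fg :: ('a \<Rightarrow> 'a) \<times> ('a \<Rightarrow> 'a). homeomorphism UNIV (B n) (fst fg) (snd fg)"
  proof
    fix n
    obtain g f :: "'a \<Rightarrow> 'a" where "homeomorphism (B n) UNIV g f"
      using assms[of n] unfolding homeomorphic_def by blast
    then have "homeomorphism UNIV (B n) f g"
      by (rule homeomorphism_symD)
    then show "\<exists>fg :: ('a \<Rightarrow> 'a) \<times> ('a \<Rightarrow> 'a). homeomorphism UNIV (B n) (fst fg) (snd fg)"
      by (intro exI[of _ "(f, g)"]) simp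
  qed
  from choice[OF this] obtain fg :: "nat \<Rightarrow> ('a \<Rightarrow> 'a) \<times> ('a \<Rightarrow> 'a)"
    where "\<forall>n. homeomorphism UNIV (B n) (fst (fg n)) (snd (fg n))"
    by blast
  then show thesis
    using that[of "\<lambda>n. fst (fg n)" "\<lambda>n. snd (fg n)"] by blast
qed

lemma dense_if_meets_basis:
  assumes basis: "topological_basis (range B)" and meets: "\<And>n. Z \<inter> B n \<noteq> {}"
  shows "closure Z = UNIV"
proof -
  have "x \<in> closure Z" for x
    unfolding closure_iff_nhds_not_empty
  proof (intro allI impI)
    fix A S assume "S \<subseteq> A" "open S" "x \<in> S"
    then obtain n where "B n \<subseteq> S"
      using topological_basisE[OF basis] by (metis rangeE)
    then show "Z \<inter> A \<noteq> {}" using meets[of n] \<open>S \<subseteq> A\<close> by blast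
  qed
  then show ?thesis by blast
qed

section \<open>The Q-property\<close>

definition Q_property :: "'a::topological_space set \<Rightarrow> bool" where
  "Q_property S \<longleftrightarrow> (\<forall>A \<subseteq> S. fsigma_in (top_of_set S) A)"

lemma Q_set_iff: "Q_set Y \<longleftrightarrow> uncountable Y \<and> Q_property Y"
  unfolding Q_set_def Q_property_def by blast

text \<open>The Q-property passes to subsets: a relative \<open>F\<sigma>\<close> of \<open>S\<close> inside \<open>T\<close> is a relative
  \<open>F\<sigma>\<close> of \<open>T\<close>.\<close>
lemma Q_property_subset:
  assumes "Q_property S" "T \<subseteq> S"
  shows "Q_property T"
  unfolding Q_property_def
proof (intro allI impI)
  fix A assume "A \<subseteq> T"
  then obtain F where "fsigma_in euclidean F" "A = F \<inter> S"
    using assms unfolding Q_property_def fsigma_in_subtopology by (meson order_trans)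
  with \<open>A \<subseteq> T\<close> \<open>T \<subseteq> S\<close> have "fsigma_in euclidean F \<and> A = F \<inter> T" by blast
  then show "fsigma_in (top_of_set T) A"
    unfolding fsigma_in_subtopology by blast
qed

lemma Q_property_homeomorphic_image:
  assumes hom: "homeomorphism S T f g" and Q: "Q_property S"
  shows "Q_property T"
  unfolding Q_property_def
proof (intro allI impI)
  fix A assume "A \<subseteq> T"
  then have gA: "g ` A \<subseteq> S"
    using homeomorphism_image2[OF hom] by blast
  have fgA: "f ` g ` A = A"
    using homeomorphism_apply2[OF hom] \<open>A \<subseteq> T\<close> by (simp add: image_image subset_iff)
  have "fsigma_in (top_of_set S) (g ` A)"
    using Q gA unfolding Q_property_def by blast
  moreover have "fsigma_in (top_of_set T) (f ` g ` A) \<longleftrightarrow> fsigma_in (top_of_set S) (g ` A)"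
    using homeomorphic_map_fsigmaness[OF homeomorphism_imp_homeomorphic_map[OF hom]] gA by simp
  ultimately have "fsigma_in (top_of_set T) (f ` g ` A)"
    by blast
  then show "fsigma_in (top_of_set T) A"
    using fgA by simp
qed

text \<open>A countable union of sets with the Q-property, each a relative \<open>F\<sigma>\<close> of the union,
  has the Q-property: a subset splits into its countably many traces on the pieces.\<close>
lemma Q_property_countable_Union:
  assumes T: "countable T" and Z: "Z = \<Union>(P ` T)"
    and Q: "\<And>j. j \<in> T \<Longrightarrow> Q_property (P j)"
    and piece: "\<And>j. j \<in> T \<Longrightarrow> fsigma_in (top_of_set Z) (P j)"
  shows "Q_property Z"
  unfolding Q_property_def
proof (intro allI impI)
  fix A assume "A \<subseteq> Z"
  have trace: "fsigma_in (top_of_set Z) (A \<inter> P j)" if j: "j \<in> T" for j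
  proof -
    have "P j \<subseteq> Z"
      using j Z by blast
    then have sub: "top_of_set (P j) = subtopology (top_of_set Z) (P j)"
      by (simp add: subtopology_subtopology inf.absorb2)
    have "fsigma_in (top_of_set (P j)) (A \<inter> P j)"
      using Q[OF j] unfolding Q_property_def by blast
    then have "fsigma_in (subtopology (top_of_set Z) (P j)) (A \<inter> P j)"
      by (simp only: sub)
    then show ?thesis
      using fsigma_in_fsigma_subtopology[OF piece[OF j]] by blast
  qed
  have "fsigma_in (top_of_set Z) (\<Union>j\<in>T. A \<inter> P j)"
    using T trace by (intro fsigma_in_Union) auto
  moreover have "A = (\<Union>j\<in>T. A \<inter> P j)"
    using \<open>A \<subseteq> Z\<close> Z by blast
  ultimately show "fsigma_in (top_of_set Z) A"
    by simp
qed

lemma fsigma_in_trace_closed_Int_open: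
  fixes C U :: "'a::metric_space set"
  assumes "closed C" "open U"
  shows "fsigma_in (top_of_set Z) (C \<inter> U \<inter> Z)"
  unfolding fsigma_in_subtopology
proof (intro exI conjI)
  show "fsigma_in euclidean (C \<inter> U)"
    using assms by (intro fsigma_in_Int closed_imp_fsigma_in open_imp_fsigma_in)
      (auto simp: metrizable_space_euclidean)
qed simp

section \<open>Greedy selection of separated pieces\<close>

fun chosen :: "(nat \<Rightarrow> 'a set) \<Rightarrow> (nat \<Rightarrow> 'a set) \<Rightarrow> nat \<Rightarrow> nat set" where
  "chosen B P 0 = {}"
| "chosen B P (Suc k) =
     chosen B P k \<union> (if B k \<inter> \<Union>(P ` chosen B P k) = {} then {k} else {})"

lemma chosen_eq: "chosen B P k = {i. i < k \<and> B i \<inter> \<Union>(P ` chosen B P i) = {}}"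
proof (induction k)
  case (Suc k)
  let ?sel = "\<lambda>i. B i \<inter> \<Union>(P ` chosen B P i) = {}"
  have "chosen B P (Suc k) = chosen B P k \<union> (if ?sel k then {k} else {})"
    by simp
  also have "\<dots> = {i. i < k \<and> ?sel i} \<union> (if ?sel k then {k} else {})"
    by (simp only: Suc.IH)
  also have "\<dots> = {i. i < Suc k \<and> ?sel i}"
    by (auto simp: less_Suc_eq)
  finally show ?case .
qed simp

lemma greedy_selection:
  fixes B P :: "nat \<Rightarrow> 'a set"
  obtains T where "0 \<in> T"
    and "\<And>i j. i \<in> T \<Longrightarrow> j \<in> T \<Longrightarrow> i < j \<Longrightarrow> B j \<inter> P i = {}"
    and "\<And>j. j \<notin> T \<Longrightarrow> \<exists>i\<in>T. B j \<inter> P i \<noteq> {}"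
proof
  define T where "T = {i. B i \<inter> \<Union>(P ` chosen B P i) = {}}"
  have chosen_T: "chosen B P k = {i \<in> T. i < k}" for k
    unfolding T_def by (subst chosen_eq) blast
  have T_iff: "j \<in> T \<longleftrightarrow> B j \<inter> \<Union>(P ` {i \<in> T. i < j}) = {}" for j
  proof -
    have "j \<in> T \<longleftrightarrow> B j \<inter> \<Union>(P ` chosen B P j) = {}"
      by (simp add: T_def)
    then show ?thesis
      by (simp only: chosen_T)
  qed
  show "0 \<in> T"
    unfolding T_def by simp
  show "B j \<inter> P i = {}" if "i \<in> T" "j \<in> T" "i < j" for i j
    using that T_iff[of j] by blast
  show "\<exists>i\<in>T. B j \<inter> P i \<noteq> {}" if "j \<notin> T" for j
    using that T_iff[of j] by blast
qed

lemma selected_piece_eq: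
  fixes B P :: "nat \<Rightarrow> 'a::topological_space set"
  assumes open_B: "\<And>j. open (B j)" and PB: "\<And>j. P j \<subseteq> B j"
    and sep: "\<And>i j. i \<in> T \<Longrightarrow> j \<in> T \<Longrightarrow> i < j \<Longrightarrow> B j \<inter> P i = {}"
    and j: "j \<in> T"
  shows "closure (P j) \<inter> B j \<inter> \<Union>(P ` T) = P j"
proof
  show "P j \<subseteq> closure (P j) \<inter> B j \<inter> \<Union>(P ` T)"
    using PB j closure_subset by blast
  show "closure (P j) \<inter> B j \<inter> \<Union>(P ` T) \<subseteq> P j"
  proof
    fix x assume x: "x \<in> closure (P j) \<inter> B j \<inter> \<Union>(P ` T)"
    then obtain i where i: "i \<in> T" "x \<in> P i" by blast
    consider "i < j" | "j < i" | "i = j" by linarith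
    then show "x \<in> P j"
    proof cases
      case 1
      then show ?thesis using sep[OF i(1) j] x i(2) by blast
    next
      case 2
      then have "B i \<inter> closure (P j) = {}"
        using sep[OF j i(1)] open_Int_closure_eq_empty[OF open_B] by blast
      then show ?thesis using x i(2) PB by blast
    qed (use i in simp)
  qed
qed

section \<open>Spreading a Q-set of size \<open>\<aleph>\<^sub>2\<close>\<close>

text \<open>A set is locally large if each of its non-empty relatively open subsets has size
  \<open>> \<aleph>\<^sub>1\<close>; for a set of size \<open>\<aleph>\<^sub>2\<close> this is exactly \<open>\<Delta> = \<aleph>\<^sub>2\<close>.\<close>
definition locally_large :: "'a::topological_space set \<Rightarrow> bool" where
  "locally_large S \<longleftrightarrow> (\<forall>U. open U \<longrightarrow> S \<inter> U \<noteq> {} \<longrightarrow> \<not> le_aleph1 (S \<inter> U))"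

text \<open>Removing the basic pieces of size \<open>\<le> \<aleph>\<^sub>1\<close> from a set of size \<open>> \<aleph>\<^sub>1\<close> leaves a locally
  large core of size \<open>> \<aleph>\<^sub>1\<close>; the removed part is a countable union of sets of size \<open>\<le> \<aleph>\<^sub>1\<close>.\<close>
lemma locally_large_core:
  fixes B :: "nat \<Rightarrow> 'a::topological_space set" and Y :: "'a set"
  assumes basis: "topological_basis (range B)" and large: "\<not> le_aleph1 Y"
  obtains Y' where "Y' \<subseteq> Y" "\<not> le_aleph1 Y'" "locally_large Y'"
proof
  define R where "R = (\<Union>n\<in>{n. le_aleph1 (Y \<inter> B n)}. Y \<inter> B n)"
  have small_R: "le_aleph1 R"
    unfolding R_def by (rule le_aleph1_countable_UN) auto
  show "Y - R \<subseteq> Y" by blast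
  show "\<not> le_aleph1 (Y - R)"
    using large small_R le_aleph1_Un le_aleph1_subset[of "(Y - R) \<union> R" Y] by blast
  show "locally_large (Y - R)"
    unfolding locally_large_def
  proof (intro allI impI notI)
    fix U assume U: "open U" "(Y - R) \<inter> U \<noteq> {}" and small_U: "le_aleph1 ((Y - R) \<inter> U)"
    obtain y where y: "y \<in> Y - R" "y \<in> U" using U(2) by blast
    then obtain n where n: "y \<in> B n" "B n \<subseteq> U"
      using topological_basisE[OF basis U(1)] by (metis rangeE)
    have "Y \<inter> B n \<subseteq> ((Y - R) \<inter> U) \<union> R" using n by blast
    then have "le_aleph1 (Y \<inter> B n)"
      using le_aleph1_Un[OF small_U small_R] le_aleph1_subset by blast
    then show False using y n unfolding R_def by blast
  qed
qed

lemma Delta_is_aleph2I: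
  assumes card: "(card_of Z, aleph2) \<in> ordIso" and local: "locally_large Z"
  shows "Delta_is Z aleph2"
  unfolding Delta_is_def
proof (intro conjI allI impI)
  have "Z \<noteq> {}"
    using card card_of_eq_aleph2_iff uncountable_if_not_le_aleph1 by (metis countable_empty)
  then show "\<exists>U. openin (top_of_set Z) U \<and> U \<noteq> {} \<and> (card_of U, aleph2) \<in> ordIso"
    using card openin_subtopology_self by blast
  fix U assume "openin (top_of_set Z) U \<and> U \<noteq> {}"
  then obtain V where "open V" "U = Z \<inter> V" "U \<noteq> {}"
    by (auto simp: openin_open Int_commute)
  then show "aleph2 \<le>o |U|"
    using local not_le_aleph1_iff unfolding locally_large_def by blast
qed

lemma homeomorphic_copy:
  assumes hom: "homeomorphism UNIV V f g"
    and Q: "Q_property S" and card: "(card_of S, aleph2) \<in> ordIso" and local: "locally_large S"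
  shows "f ` S \<subseteq> V" "Q_property (f ` S)" "(card_of (f ` S), aleph2) \<in> ordIso"
    and "locally_large (f ` S)"
proof -
  have inj: "inj_on f S"
    using hom by (rule homeomorphism_inj_on)
  show "f ` S \<subseteq> V"
    using homeomorphism_image1[OF hom] by blast
  then have "homeomorphism S (f ` S) f g"
    using homeomorphism_of_subsets[OF hom] by blast
  then show "Q_property (f ` S)"
    using Q by (rule Q_property_homeomorphic_image)
  show "(card_of (f ` S), aleph2) \<in> ordIso"
    using card_of_inj_image[OF inj] card by (rule ordIso_transitive)
  show "locally_large (f ` S)"
    unfolding locally_large_def
  proof (intro allI impI)
    fix U assume U: "open U" "f ` S \<inter> U \<noteq> {}"
    have eq: "f ` S \<inter> U = f ` (S \<inter> f -` U)"
      by blast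
    have "open (f -` U)"
      using homeomorphism_cont1[OF hom] U(1) by (rule open_vimage[rotated])
    moreover have "S \<inter> f -` U \<noteq> {}"
      using U(2) by blast
    ultimately have "\<not> le_aleph1 (S \<inter> f -` U)"
      using local unfolding locally_large_def by blast
    then show "\<not> le_aleph1 (f ` S \<inter> U)"
      unfolding eq le_aleph1_inj_image[OF homeomorphism_inj_on[OF hom]] .
  qed
qed

lemma union_of_selected_pieces:
  fixes B P :: "nat \<Rightarrow> 'a::metric_space set"
  assumes open_B: "\<And>j. open (B j)" and P_B: "\<And>j. P j \<subseteq> B j"
    and P_Q: "\<And>j. Q_property (P j)" and P_card: "\<And>j. (card_of (P j), aleph2) \<in> ordIso"
    and P_local: "\<And>j. locally_large (P j)"
    and T0: "0 \<in> T" and sep: "\<And>i j. i \<in> T \<Longrightarrow> j \<in> T \<Longrightarrow> i < j \<Longrightarrow> B j \<inter> P i = {}"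
  defines "Z \<equiv> \<Union>(P ` T)"
  shows "Q_set Z" "(card_of Z, aleph2) \<in> ordIso" "Delta_is Z aleph2"
proof -
  have "Q_property Z"
  proof (rule Q_property_countable_Union[OF countableI_type Z_def[THEN meta_eq_to_obj_eq] P_Q])
    fix j assume "j \<in> T"
    have "closure (P j) \<inter> B j \<inter> Z = P j"
      unfolding Z_def using open_B P_B sep \<open>j \<in> T\<close> by (rule selected_piece_eq)
    then show "fsigma_in (top_of_set Z) (P j)"
      using fsigma_in_trace_closed_Int_open[OF closed_closure open_B] by metis
  qed
  moreover have Z_large: "\<not> le_aleph1 Z"
    using P_card[of 0] T0 le_aleph1_subset card_of_eq_aleph2_iff unfolding Z_def by blast
  ultimately show "Q_set Z"
    using uncountable_if_not_le_aleph1 Q_set_iff by blast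
  have "|Z| \<le>o aleph2"
    unfolding Z_def
    by (rule card_of_countable_UN_le[OF Cinfinite_aleph2 countableI_type])
      (use P_card ordIso_iff_ordLeq in blast)
  then show Z_card: "(card_of Z, aleph2) \<in> ordIso"
    using Z_large card_of_eq_aleph2_iff by blast
  have "locally_large Z"
    unfolding locally_large_def
  proof (intro allI impI)
    fix U assume U: "open U" "Z \<inter> U \<noteq> {}"
    then obtain j where "j \<in> T" "P j \<inter> U \<noteq> {}"
      unfolding Z_def by blast
    then have "\<not> le_aleph1 (P j \<inter> U)" and "P j \<inter> U \<subseteq> Z \<inter> U"
      using P_local U(1) unfolding Z_def locally_large_def by auto
    then show "\<not> le_aleph1 (Z \<inter> U)"
      using le_aleph1_subset by blast
  qed
  with Z_card show "Delta_is Z aleph2"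
    by (rule Delta_is_aleph2I)
qed

lemma union_of_selected_pieces_dense:
  fixes B P :: "nat \<Rightarrow> 'a::topological_space set"
  assumes basis: "topological_basis (range B)"
    and P_B: "\<And>j. P j \<subseteq> B j" and P_ne: "\<And>j. P j \<noteq> {}"
    and rejected: "\<And>j. j \<notin> T \<Longrightarrow> \<exists>i\<in>T. B j \<inter> P i \<noteq> {}"
  shows "closure (\<Union>(P ` T)) = UNIV"
proof (rule dense_if_meets_basis[OF basis])
  fix j
  show "\<Union>(P ` T) \<inter> B j \<noteq> {}"
  proof (cases "j \<in> T")
    case True
    then show ?thesis using P_B[of j] P_ne[of j] by blast
  next
    case False
    then show ?thesis using rejected by blast
  qed
qed

lemma Q_set_spread:
  fixes B :: "nat \<Rightarrow> 'a::metric_space set" and f g :: "nat \<Rightarrow> 'a \<Rightarrow> 'a" and Y :: "'a set"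
  assumes basis: "topological_basis (range B)" and open_B: "\<And>n. open (B n)"
    and hom: "\<And>n. homeomorphism UNIV (B n) (f n) (g n)"
    and Y: "Q_set Y" "(card_of Y, aleph2) \<in> ordIso"
  shows "\<exists>Z :: 'a set. Q_set Z \<and> (card_of Z, aleph2) \<in> ordIso \<and> closure Z = UNIV \<and> Delta_is Z aleph2"
proof -
  have "\<not> le_aleph1 Y"
    using Y(2) card_of_eq_aleph2_iff by blast
  then obtain Y' where Y': "Y' \<subseteq> Y" "\<not> le_aleph1 Y'" "locally_large Y'"
    using locally_large_core[OF basis] by blast
  have "|Y'| \<le>o aleph2"
    using card_of_mono1[OF Y'(1)] Y(2) by (rule ordLeq_ordIso_trans)
  then have Y'_card: "(card_of Y', aleph2) \<in> ordIso"
    using Y'(2) card_of_eq_aleph2_iff by blast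
  have Y'_Q: "Q_property Y'"
    using Y(1) Y'(1) Q_property_subset Q_set_iff by blast
  define P where "P j = f j ` Y'" for j
  note copy = homeomorphic_copy[OF hom Y'_Q Y'_card Y'(3), folded P_def]
  have P_ne: "P j \<noteq> {}" for j
    using copy(3)[of j] card_of_eq_aleph2_iff uncountable_if_not_le_aleph1 by (metis countable_empty)
  obtain T where T0: "0 \<in> T"
    and sep: "\<And>i j. i \<in> T \<Longrightarrow> j \<in> T \<Longrightarrow> i < j \<Longrightarrow> B j \<inter> P i = {}"
    and rejected: "\<And>j. j \<notin> T \<Longrightarrow> \<exists>i\<in>T. B j \<inter> P i \<noteq> {}"
    using greedy_selection by blast
  show ?thesis
  proof (intro exI conjI)
    show "Q_set (\<Union>(P ` T))" "(card_of (\<Union>(P ` T)), aleph2) \<in> ordIso"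
      "Delta_is (\<Union>(P ` T)) aleph2"
      using union_of_selected_pieces[where B = B and P = P and T = T, OF open_B copy T0 sep]
      by blast+
    show "closure (\<Union>(P ` T)) = UNIV"
      using basis copy(1) P_ne rejected by (rule union_of_selected_pieces_dense)
  qed
qed

section \<open>Spreading a Luzin set\<close>

text \<open>If \<open>f\<close> is a homeomorphism of the space onto an open set \<open>U\<close>, then \<open>f\<close>-preimages of
  nowhere dense sets are nowhere dense: closure and interior commute with the inverse
  homeomorphism \<open>g : U \<rightarrow> UNIV\<close>, and the closure of \<open>N \<inter> U\<close> relative to the open set \<open>U\<close>
  has empty interior.\<close>
lemma nowhere_dense_vimage_homeomorphism:
  assumes hom: "homeomorphism UNIV U f g" and U: "open U" and N: "nowhere_dense N"
  shows "nowhere_dense (f -` N)"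
proof -
  have vimage_eq: "f -` N = g ` (N \<inter> U)"
  proof
    show "f -` N \<subseteq> g ` (N \<inter> U)"
    proof
      fix x assume "x \<in> f -` N"
      moreover have "g (f x) = x" "f x \<in> U"
        using homeomorphism_apply1[OF hom] homeomorphism_image1[OF hom] by auto
      ultimately show "x \<in> g ` (N \<inter> U)"
        by (metis IntI image_eqI vimageE)
    qed
    show "g ` (N \<inter> U) \<subseteq> f -` N"
      using homeomorphism_apply2[OF hom] by auto
  qed
  have hmap: "homeomorphic_map (top_of_set U) euclidean g"
    using homeomorphism_imp_homeomorphic_map[OF homeomorphism_symD[OF hom]] by simp
  have open_U: "openin euclidean U"
    using U by simp
  have "closure (g ` (N \<inter> U)) = g ` (U \<inter> closure (N \<inter> U))"
    using homeomorphic_map_closure_of[OF hmap, of "N \<inter> U"]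
    by (simp add: closure_of_subtopology_open[OF disjI1[OF open_U]])
  then have "interior (closure (g ` (N \<inter> U))) = g ` (U \<inter> interior (U \<inter> closure (N \<inter> U)))"
    using homeomorphic_map_interior_of[OF hmap, of "U \<inter> closure (N \<inter> U)"]
    by (simp add: interior_of_subtopology_open[OF open_U])
  also have "\<dots> \<subseteq> g ` interior (closure N)"
    by (intro image_mono Int_lower2[THEN order_trans] interior_mono) (simp add: closure_mono le_infI2)
  finally show ?thesis
    using N unfolding nowhere_dense_def vimage_eq by blast
qed

lemma first_category_vimage_homeomorphism:
  assumes hom: "homeomorphism UNIV U f g" and U: "open U" and M: "first_category M"
  shows "first_category (f -` M)"
proof -
  obtain \<N> where N: "countable \<N>" "\<And>N. N \<in> \<N> \<Longrightarrow> nowhere_dense N" "\<Union>\<N> = M"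
    using M unfolding first_category_def union_of_def by blast
  have "countable (vimage f ` \<N>)"
    using N(1) by simp
  moreover have "\<forall>N'\<in>vimage f ` \<N>. nowhere_dense N'"
    using N(2) nowhere_dense_vimage_homeomorphism[OF hom U] by blast
  moreover have "\<Union>(vimage f ` \<N>) = f -` M"
    using N(3) by blast
  ultimately show ?thesis
    unfolding first_category_def union_of_def by blast
qed

lemma Luzin_set_homeomorphic_copy:
  fixes f :: "'a::topological_space \<Rightarrow> 'b::topological_space"
  assumes hom: "homeomorphism UNIV V f g" and V: "open V" and Y: "Luzin_set Y"
  shows "Luzin_set (f ` Y)"
  unfolding Luzin_set_def
proof (intro conjI allI impI)
  show "uncountable (f ` Y)"
  proof
    assume "countable (f ` Y)"
    then have "countable Y"
      using homeomorphism_inj_on[OF hom] by (rule countable_image_inj_on)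
    then show False
      using Y unfolding Luzin_set_def by blast
  qed
  fix M :: "'b set" assume "first_category M"
  then have "countable (Y \<inter> f -` M)"
    using Y first_category_vimage_homeomorphism[OF hom V] unfolding Luzin_set_def by blast
  moreover have "f ` Y \<inter> M = f ` (Y \<inter> f -` M)"
    by blast
  ultimately show "countable (f ` Y \<inter> M)"
    by simp
qed

lemma Luzin_set_countable_Union:
  fixes Y :: "'i \<Rightarrow> 'a::topological_space set"
  assumes "countable I" "I \<noteq> {}" "\<And>i. i \<in> I \<Longrightarrow> Luzin_set (Y i)"
  shows "Luzin_set (\<Union>i\<in>I. Y i)"
  unfolding Luzin_set_def
proof (intro conjI allI impI)
  obtain i where i: "i \<in> I"
    using assms(2) by blast
  then have "uncountable (Y i)"
    using assms(3) unfolding Luzin_set_def by blast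
  moreover have "Y i \<subseteq> (\<Union>i\<in>I. Y i)"
    using i by blast
  ultimately show "uncountable (\<Union>i\<in>I. Y i)"
    using countable_subset by blast
  fix M :: "'a set" assume "first_category M"
  then have "countable (\<Union>i\<in>I. Y i \<inter> M)"
    using assms(1,3) unfolding Luzin_set_def by (intro countable_UN) auto
  then show "countable ((\<Union>i\<in>I. Y i) \<inter> M)"
    by (simp add: Int_UN_distrib2)
qed

lemma Luzin_set_spread:
  fixes B :: "nat \<Rightarrow> 'a::topological_space set" and f g :: "nat \<Rightarrow> 'a \<Rightarrow> 'a" and Y :: "'a set"
  assumes basis: "topological_basis (range B)" and open_B: "\<And>n. open (B n)"
    and hom: "\<And>n. homeomorphism UNIV (B n) (f n) (g n)"
    and Y: "Luzin_set Y"
  shows "\<exists>Z :: 'a set. Luzin_set Z \<and> closure Z = UNIV \<and>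
              (\<forall>U. openin (top_of_set Z) U \<and> U \<noteq> {} \<longrightarrow> uncountable U)"
proof -
  define Z where "Z = (\<Union>n. f n ` Y)"
  have copy: "Luzin_set (f n ` Y)" for n
    using hom open_B Y by (rule Luzin_set_homeomorphic_copy)
  have copy_Z: "f n ` Y \<subseteq> Z \<inter> B n" for n
    using homeomorphism_image1[OF hom[of n]] unfolding Z_def by blast
  have copy_ne: "f n ` Y \<noteq> {}" for n
    using copy[of n] unfolding Luzin_set_def by auto
  show ?thesis
  proof (intro exI[of _ Z] conjI allI impI)
    show "Luzin_set Z"
      unfolding Z_def using copy by (intro Luzin_set_countable_Union) auto
    show "closure Z = UNIV"
      using copy_Z copy_ne by (intro dense_if_meets_basis[OF basis]) blast
    fix U assume "openin (top_of_set Z) U \<and> U \<noteq> {}"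
    then obtain V where V: "open V" "U = Z \<inter> V" "U \<noteq> {}"
      by (auto simp: openin_open Int_commute)
    then obtain z where "z \<in> V"
      by blast
    then obtain W where "W \<in> range B" "W \<subseteq> V"
      by (rule topological_basisE[OF basis V(1)])
    then obtain n where "B n \<subseteq> V"
      by blast
    then have "f n ` Y \<subseteq> U"
      using copy_Z[of n] V(2) by blast
    moreover have "uncountable (f n ` Y)"
      using copy[of n] unfolding Luzin_set_def by blast
    ultimately show "uncountable U"
      using countable_subset by blast
  qed
qed

theorem mainTheorem10:
  fixes B :: "nat \<Rightarrow> 'a::polish_space set"
  assumes basis: "topological_basis (range B)"
    and open_B: "\<And>n. open (B n)"
    and ne_B: "\<And>n. B n \<noteq> {}"
    and homeo_B: "\<And>n. B n homeomorphic (UNIV :: 'a set)"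
  shows "((\<exists>Y::'a set. Q_set Y \<and> (card_of Y, aleph2) \<in> ordIso) \<longrightarrow>
           (\<exists>Z::'a set. Q_set Z \<and> (card_of Z, aleph2) \<in> ordIso \<and> closure Z = UNIV
                      \<and> Delta_is Z aleph2))
       \<and> ((\<exists>Y::'a set. Luzin_set Y) \<longrightarrow>
           (\<exists>Z::'a set. Luzin_set Z \<and> closure Z = UNIV \<and>
              (\<forall>U. openin (top_of_set Z) U \<and> U \<noteq> {} \<longrightarrow> uncountable U)))"
proof -
  obtain f g :: "nat \<Rightarrow> 'a \<Rightarrow> 'a" where hom: "\<And>n. homeomorphism UNIV (B n) (f n) (g n)"
    using homeomorphisms_onto_basis[where B = B, OF homeo_B] by blast
  show ?thesis
  proof (intro conjI impI; elim exE conjE)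
    fix Y :: "'a set"
    assume "Q_set Y" "(card_of Y, aleph2) \<in> ordIso"
    then show "\<exists>Z::'a set. Q_set Z \<and> (card_of Z, aleph2) \<in> ordIso \<and> closure Z = UNIV
                 \<and> Delta_is Z aleph2"
      by (rule Q_set_spread[OF basis open_B hom])
  next
    fix Y :: "'a set"
    assume "Luzin_set Y"
    then show "\<exists>Z::'a set. Luzin_set Z \<and> closure Z = UNIV \<and>
                 (\<forall>U. openin (top_of_set Z) U \<and> U \<noteq> {} \<longrightarrow> uncountable U)"
      by (rule Luzin_set_spread[OF basis open_B hom])
  qed
qed

end
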